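(* Let $k\ge1$ and $A,B\in SL(k,\mathbb Z)$. If $S_A$ is of diagonal type and $S_B$ is of non-diagonal type, then $S_A$ is not isomorphic to $S_B$.
   Context: For $A\in SL(k,\mathbb Z)$, $S_A$ denotes the semi-direct product $\mathbb Z\ltimes\mathbb Z^k$ associated with the action of $\mathbb Z$ on $\mathbb Z^k$ given by $m\circ x=A^m x$. $S_A$ is said to be of diagonal type if $A$ is diagonalizable over $\mathbb C$ and all its eigenvalues are different from $1$; it is of non-diagonal type if $A$ is not diagonalizable over $\mathbb C$ and all its eigenvalues are different from $1$. *)

theory Defs
  imports "HOL-Analysis.Analysis" "HOL-Algebra.Group"
begin

text \<open>Integer matrices of size k = CARD('n); SL(k,Z) = determinant 1.\<close>
definition in_SL :: "int^'n^'n \<Rightarrow> bool" where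
  "in_SL A \<longleftrightarrow> det A = 1"

definition int_matpow :: "int^'n^'n \<Rightarrow> int \<Rightarrow> int^'n^'n" where
  "int_matpow A m = (if 0 \<le> m then ((\<lambda>M. A ** M) ^^ nat m) (mat 1)
                     else ((\<lambda>M. matrix_inv A ** M) ^^ nat (- m)) (mat 1))"

definition S_grp :: "int^'n^'n \<Rightarrow> (int \<times> (int^'n)) monoid" where
  "S_grp A = \<lparr> carrier = UNIV,
              mult = (\<lambda>(m, x) (m', x'). (m + m', x + int_matpow A m *v x')),
              one = (0, 0) \<rparr>"

definition cmat :: "int^'n^'n \<Rightarrow> complex^'n^'n" where
  "cmat A = map_matrix of_int A"

definition is_eigenvalue_C :: "int^'n^'n \<Rightarrow> complex \<Rightarrow> bool" where
  "is_eigenvalue_C A c \<longleftrightarrow> (\<exists>v::complex^'n. v \<noteq> 0 \<and> cmat A *v v = c *s v)"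

definition diagonalizable_C :: "int^'n^'n \<Rightarrow> bool" where
  "diagonalizable_C A \<longleftrightarrow> (\<exists>P D::complex^'n^'n. invertible P \<and>
      (\<forall>i j. i \<noteq> j \<longrightarrow> D $ i $ j = 0) \<and> cmat A = P ** D ** matrix_inv P)"

definition diagonal_type :: "int^'n^'n \<Rightarrow> bool" where
  "diagonal_type A \<longleftrightarrow> diagonalizable_C A \<and> (\<forall>c. is_eigenvalue_C A c \<longrightarrow> c \<noteq> 1)"

definition non_diagonal_type :: "int^'n^'n \<Rightarrow> bool" where
  "non_diagonal_type A \<longleftrightarrow> \<not> diagonalizable_C A \<and> (\<forall>c. is_eigenvalue_C A c \<longrightarrow> c \<noteq> 1)"

end

(* An isomorphism h from S_A to S_B maps the normal subgroup Z^k of S_A into that of S_B: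
   the Z-coordinate of h on Z^k is an additive form c with c A = c, and c = 0 because A has
   no eigenvalue 1.  So h restricts to an integer matrix P with integer inverse, and comparing
   h((1,0)(0,x)) with h((0,Ax)(1,0)) gives B^e P = P A, where (e, y) = h(1,0).  Since h
   induces an isomorphism of the quotients Z, e = 1 or e = -1.  Thus B^e is similar to A,
   hence diagonalizable over C, and so is B, which is B^e or its inverse. *)

theory Submission
  imports Defs
begin

lemma matrix_inv_inverse:
  assumes "invertible (M::'a::semiring_1^'n^'n)"
  shows "M ** matrix_inv M = mat 1" and "matrix_inv M ** M = mat 1"
  using someI_ex[OF assms[unfolded invertible_def]] by (simp_all add: matrix_inv_def)

lemma matrix_inv_eq_right_inverse:
  assumes "invertible (M::'a::semiring_1^'n^'n)" and "M ** N = mat 1"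
  shows "matrix_inv M = N"
  by (metis assms matrix_inv_inverse(2) matrix_mul_assoc matrix_mul_lid matrix_mul_rid)

lemma matrix_vector_mult_axis_nth: "(M *v axis i 1) $ j = (M $ j $ i :: 'a::semiring_1)"
  by (simp add: matrix_vector_mult_def axis_def if_distrib cong: if_cong)

lemma left_fixed_vector_eq_0:
  fixes M :: "'a::field^'n^'n"
  assumes no_fix: "\<And>v. M *v v = v \<Longrightarrow> v = 0" and "c v* M = c"
  shows "c = 0"
proof -
  have "inj ((*v) (M - mat 1))"
  proof (rule injI)
    fix v w
    assume "(M - mat 1) *v v = (M - mat 1) *v w"
    then have "M *v (v - w) = v - w"
      by (simp add: algebra_simps)
    then show "v = w"
      using no_fix[of "v - w"] by simp
  qed
  then obtain X where "X ** (M - mat 1) = mat 1"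
    using matrix_left_invertible_injective by blast
  then have "(M - mat 1) ** X = mat 1"
    using matrix_left_right_inverse by blast
  then have "c = (c v* (M - mat 1)) v* X"
    by (simp add: vector_matrix_mul_assoc)
  also have "\<dots> = 0"
    using assms(2) by (simp add: algebra_simps)
  finally show ?thesis .
qed

lemma additive_int_vec_eq_sum:
  fixes f :: "int^'n \<Rightarrow> int"
  assumes add: "\<And>x y. f (x + y) = f x + f y"
  shows "f x = (\<Sum>j\<in>UNIV. x $ j * f (axis j 1))"
proof -
  have f0: "f 0 = 0"
    using add[of 0 0] by simp
  have f_uminus: "f (- v) = - f v" for v
    using add[of v "- v"] f0 by simp
  have f_nat_scale: "f (int n *s v) = int n * f v" for n v
  proof (induction n)
    case (Suc n)
    have "int (Suc n) *s v = v + int n *s v"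
      by (simp add: vector_sadd_rdistrib)
    then show ?case
      using Suc add by (simp add: algebra_simps)
  qed (simp add: f0)
  have f_scale: "f (m *s v) = m * f v" for m v
  proof (cases "m \<ge> 0")
    case True
    then show ?thesis
      using f_nat_scale[of "nat m" v] by simp
  next
    case False
    then have "m *s v = - (int (nat (- m)) *s v)"
      by (simp add: vec_eq_iff)
    then show ?thesis
      using f_nat_scale[of "nat (- m)" v] f_uminus False by simp
  qed
  have f_sum: "f (sum g S) = (\<Sum>j\<in>S. f (g j))" if "finite S" for g and S :: "'n set"
    using that by (induction S rule: finite_induct) (simp_all add: f0 add)
  have "f x = f (\<Sum>j\<in>UNIV. x $ j *s axis j 1)"
    by (simp add: basis_expansion)
  also have "\<dots> = (\<Sum>j\<in>UNIV. x $ j * f (axis j 1))"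
    by (simp add: f_sum f_scale)
  finally show ?thesis .
qed

definition diagonal_mat :: "'a::zero^'n^'n \<Rightarrow> bool" where
  "diagonal_mat D \<longleftrightarrow> (\<forall>i j. i \<noteq> j \<longrightarrow> D $ i $ j = 0)"

definition diagonalizable_mat :: "'a::field^'n^'n \<Rightarrow> bool" where
  "diagonalizable_mat M \<longleftrightarrow>
    (\<exists>P D :: 'a^'n^'n. invertible P \<and> diagonal_mat D \<and> M = P ** D ** matrix_inv P)"

lemma diagonalizable_similar:
  fixes M X Y :: "'a::field^'n^'n"
  assumes "diagonalizable_mat M" and XY: "X ** Y = mat 1"
  shows "diagonalizable_mat (X ** M ** Y)"
proof -
  obtain P D :: "'a^'n^'n"
    where P: "invertible P" and D: "diagonal_mat D" and M: "M = P ** D ** matrix_inv P"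
    using assms(1) unfolding diagonalizable_mat_def by blast
  have XP: "invertible (X ** P)"
    using XY P invertible_right_inverse invertible_mult by blast
  have "(X ** P) ** (matrix_inv P ** Y) = X ** (P ** matrix_inv P) ** Y"
    by (simp add: matrix_mul_assoc)
  then have "matrix_inv (X ** P) = matrix_inv P ** Y"
    using XP XY matrix_inv_eq_right_inverse by (metis P matrix_inv_inverse(1) matrix_mul_rid)
  then have "X ** M ** Y = (X ** P) ** D ** matrix_inv (X ** P)"
    by (simp add: M matrix_mul_assoc)
  with XP D show ?thesis
    unfolding diagonalizable_mat_def by blast
qed

lemma diagonal_right_inverse:
  fixes D E :: "'a::field^'n^'n"
  assumes D: "diagonal_mat D" and DE: "D ** E = mat 1"
  shows "diagonal_mat E"
  unfolding diagonal_mat_def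
proof (intro allI impI)
  fix i j :: 'n
  assume "i \<noteq> j"
  have DE_entry: "(D ** E) $ i $ j = D $ i $ i * E $ i $ j" for j
  proof -
    have "(D ** E) $ i $ j = (\<Sum>k\<in>UNIV. D $ i $ k * E $ k $ j)"
      by (simp add: matrix_matrix_mult_def)
    also have "\<dots> = (\<Sum>k\<in>UNIV. if k = i then D $ i $ i * E $ i $ j else 0)"
      using D by (intro sum.cong) (auto simp: diagonal_mat_def)
    finally show ?thesis
      by simp
  qed
  have "D $ i $ i \<noteq> 0"
    using DE_entry[of i] DE by (auto simp: mat_def)
  moreover have "D $ i $ i * E $ i $ j = 0"
    using DE_entry[of j] DE \<open>i \<noteq> j\<close> by (simp add: mat_def)
  ultimately show "E $ i $ j = 0"
    by simp
qed

lemma diagonalizable_right_inverse: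
  fixes M N :: "'a::field^'n^'n"
  assumes "diagonalizable_mat M" and MN: "M ** N = mat 1"
  shows "diagonalizable_mat N"
proof -
  obtain P D :: "'a^'n^'n"
    where P: "invertible P" and D: "diagonal_mat D" and M: "M = P ** D ** matrix_inv P"
    using assms(1) unfolding diagonalizable_mat_def by blast
  define P' where "P' = matrix_inv P"
  have PP': "P ** P' = mat 1" and P'P: "P' ** P = mat 1"
    using matrix_inv_inverse[OF P] by (simp_all add: P'_def)
  define E where "E = P' ** N ** P"
  have "P' ** M ** P = (P' ** P) ** D ** (P' ** P)"
    by (simp add: M P'_def matrix_mul_assoc)
  then have "D = P' ** M ** P"
    by (simp add: P'P)
  then have "D ** E = P' ** (M ** (P ** P') ** N) ** P"
    by (simp add: E_def matrix_mul_assoc)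
  then have "diagonal_mat E"
    using diagonal_right_inverse[OF D] by (simp add: PP' MN P'P)
  moreover have "P ** E ** P' = (P ** P') ** N ** (P ** P')"
    by (simp add: E_def matrix_mul_assoc)
  then have "N = P ** E ** P'"
    by (simp add: PP')
  ultimately show ?thesis
    using P unfolding diagonalizable_mat_def P'_def by blast
qed

definition cvec :: "int^'n \<Rightarrow> complex^'n" where
  "cvec v = (\<chi> i. of_int (v $ i))"

lemma cmat_mult: "cmat (M ** N) = cmat M ** cmat N"
  by (simp add: cmat_def matrix_matrix_mult_def vec_eq_iff of_int_sum)

lemma cmat_mult_cvec: "cmat M *v cvec v = cvec (M *v v)"
  by (simp add: cmat_def cvec_def matrix_vector_mult_def vec_eq_iff of_int_sum)

lemma cvec_vector_matrix_mult: "cvec v v* cmat M = cvec (v v* M)"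
  by (simp add: cmat_def cvec_def vector_matrix_mult_def vec_eq_iff of_int_sum)

lemma cmat_mat: "cmat (mat 1) = mat 1"
  by (simp add: cmat_def mat_def vec_eq_iff)

lemma cmat_inject: "cmat M = cmat N \<longleftrightarrow> M = N"
  by (simp add: cmat_def vec_eq_iff)

lemma cvec_inject: "cvec v = cvec w \<longleftrightarrow> v = w"
  by (simp add: cvec_def vec_eq_iff)

lemma cvec_eq_0_iff: "cvec v = 0 \<longleftrightarrow> v = 0"
  by (simp add: cvec_def vec_eq_iff)

lemma det_cmat: "det (cmat M) = of_int (det M)"
  by (simp add: det_def cmat_def of_int_sum of_int_prod)

lemma cmat_right_inverse:
  assumes "M ** N = mat 1"
  shows "cmat N ** cmat M = mat 1"
proof -
  have "cmat M ** cmat N = mat 1"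
    by (simp add: assms cmat_mat flip: cmat_mult)
  then show ?thesis
    using matrix_left_right_inverse by blast
qed

lemma diagonalizable_C_iff_diagonalizable_cmat:
  "diagonalizable_C A \<longleftrightarrow> diagonalizable_mat (cmat A)"
  by (simp add: diagonalizable_C_def diagonalizable_mat_def diagonal_mat_def)

text \<open>Over \<open>\<int>\<close> Cramer's rule needs no division once \<open>det M = 1\<close>.\<close>

lemma int_cramer_solution:
  fixes M :: "int^'n^'n"
  assumes "det M = 1"
  shows "M *v (\<chi> k. det (\<chi> i l. if l = k then b $ i else M $ i $ l)) = b"
proof -
  define x where "x = (\<chi> k. det (\<chi> i l. if l = k then b $ i else M $ i $ l))"
  have cdet: "det (cmat M) = 1"
    using assms by (simp add: det_cmat)
  then have ne: "det (cmat M) \<noteq> 0"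
    by simp
  have cmat_replaced: "cmat (\<chi> i l. if l = k then b $ i else M $ i $ l)
      = (\<chi> i l. if l = k then cvec b $ i else cmat M $ i $ l)" for k
    by (simp add: cmat_def cvec_def vec_eq_iff)
  have "of_int (det (\<chi> i l. if l = k then b $ i else M $ i $ l))
      = det (\<chi> i l. if l = k then cvec b $ i else cmat M $ i $ l)" for k
    by (simp only: cmat_replaced flip: det_cmat)
  then have "cvec x =
      (\<chi> k. det (\<chi> i l. if l = k then cvec b $ i else cmat M $ i $ l) / det (cmat M))"
    by (simp add: x_def cvec_def cdet)
  then have "cmat M *v cvec x = cvec b"
    unfolding cramer[OF ne] .
  then show ?thesis
    by (simp add: x_def cmat_mult_cvec cvec_inject)
qed

lemma invertible_int_det_1:
  fixes M :: "int^'n^'n"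
  assumes "det M = 1"
  shows "invertible M"
proof -
  define X where "X = (\<chi> j k. det (\<chi> i l. if l = k then axis j 1 $ i else M $ i $ l))"
  have "M *v X $ j = axis j 1" for j
    unfolding X_def vec_lambda_beta by (rule int_cramer_solution[OF assms])
  moreover have "(M ** transpose X) $ i $ j = (M *v X $ j) $ i" for i j
    by (simp add: matrix_matrix_mult_def matrix_vector_mult_def transpose_def)
  ultimately have MN: "M ** transpose X = mat 1"
    by (simp add: vec_eq_iff mat_def axis_def)
  then have "cmat (transpose X ** M) = cmat (mat 1)"
    by (simp add: cmat_right_inverse cmat_mult cmat_mat)
  then have "transpose X ** M = mat 1"
    by (simp only: cmat_inject)
  with MN show ?thesis
    unfolding invertible_def by blast
qed

lemma int_matpow_0 [simp]: "int_matpow M 0 = mat 1"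
  by (simp add: int_matpow_def)

lemma int_matpow_1 [simp]: "int_matpow M 1 = M"
  by (simp add: int_matpow_def)

lemma int_matpow_minus_1: "int_matpow M (-1) = matrix_inv M"
  by (simp add: int_matpow_def)

lemma diagonalizable_cmat_of_int_matpow_unit:
  assumes "det B = 1" and "e = 1 \<or> e = -1" and "diagonalizable_mat (cmat (int_matpow B e))"
  shows "diagonalizable_mat (cmat B)"
  using assms(2)
proof
  assume "e = -1"
  then have "diagonalizable_mat (cmat (matrix_inv B))"
    using assms(3) by (simp add: int_matpow_minus_1)
  moreover have "cmat (matrix_inv B) ** cmat B = mat 1"
    using cmat_right_inverse matrix_inv_inverse(1)[OF invertible_int_det_1[OF assms(1)]] by blast
  ultimately show ?thesis
    by (rule diagonalizable_right_inverse)
qed (use assms(3) in simp)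

lemma carrier_S_grp [simp]: "carrier (S_grp A) = UNIV"
  by (simp add: S_grp_def)

lemma S_grp_mult:
  "u \<otimes>\<^bsub>S_grp A\<^esub> v = (fst u + fst v, snd u + int_matpow A (fst u) *v snd v)"
  by (cases u, cases v) (simp add: S_grp_def)

lemma S_hom_mult:
  assumes "h \<in> hom (S_grp A) (S_grp B)"
  shows "h (u \<otimes>\<^bsub>S_grp A\<^esub> v) = h u \<otimes>\<^bsub>S_grp B\<^esub> h v"
  using hom_mult[OF assms] by simp

lemma S_iso_inv_hom:
  assumes "h \<in> iso (S_grp A) (S_grp B)"
  shows "inv_into UNIV h \<in> hom (S_grp B) (S_grp A)"
proof -
  define g where "g = inv_into UNIV h"
  have "bij h"
    using assms by (simp add: iso_def)
  have "g (u \<otimes>\<^bsub>S_grp B\<^esub> v) = g u \<otimes>\<^bsub>S_grp A\<^esub> g v" for u v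
  proof -
    have "h (g u \<otimes>\<^bsub>S_grp A\<^esub> g v) = u \<otimes>\<^bsub>S_grp B\<^esub> v"
      using \<open>bij h\<close> S_hom_mult[OF iso_imp_homomorphism[OF assms]]
      by (simp add: g_def bij_is_surj surj_f_inv_f)
    then show ?thesis
      using inv_into_f_f[OF bij_is_inj[OF \<open>bij h\<close>] UNIV_I, of "g u \<otimes>\<^bsub>S_grp A\<^esub> g v"]
      by (simp only: g_def)
  qed
  then show ?thesis
    unfolding hom_def g_def by simp
qed

lemma S_hom_fst_vec_eq_0:
  assumes h: "h \<in> hom (S_grp A) (S_grp B)" and no_fix: "\<not> is_eigenvalue_C A 1"
  shows "fst (h (0, x)) = 0"
proof -
  note h_mult = S_hom_mult[OF h]
  define f where "f x = fst (h (0, x))" for x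
  define c where "c = (\<chi> j. f (axis j 1))"
  have f_add: "f (x + y) = f x + f y" for x y
  proof -
    have "h (0, x + y) = h ((0, x) \<otimes>\<^bsub>S_grp A\<^esub> (0, y))"
      by (simp add: S_grp_mult)
    also have "\<dots> = h (0, x) \<otimes>\<^bsub>S_grp B\<^esub> h (0, y)"
      by (rule h_mult)
    finally show ?thesis
      by (simp add: f_def S_grp_mult)
  qed
  have f_eq: "f x = (\<Sum>j\<in>UNIV. x $ j * c $ j)" for x
    unfolding c_def vec_lambda_beta by (rule additive_int_vec_eq_sum[OF f_add])
  have f_A: "f (A *v x) = f x" for x
  proof -
    have "h (1, 0) \<otimes>\<^bsub>S_grp B\<^esub> h (0, x) = h ((1, 0) \<otimes>\<^bsub>S_grp A\<^esub> (0, x))"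
      by (rule h_mult[symmetric])
    also have "\<dots> = h ((0, A *v x) \<otimes>\<^bsub>S_grp A\<^esub> (1, 0))"
      by (simp add: S_grp_mult)
    also have "\<dots> = h (0, A *v x) \<otimes>\<^bsub>S_grp B\<^esub> h (1, 0)"
      by (rule h_mult)
    finally show ?thesis
      by (simp add: S_grp_mult f_def)
  qed
  have "c v* A = c"
  proof (rule vec_eq_iff[THEN iffD2], rule allI)
    fix i
    have "(c v* A) $ i = f (A *v axis i 1)"
      by (simp add: f_eq vector_matrix_mult_def matrix_vector_mult_axis_nth mult.commute)
    also have "\<dots> = c $ i"
      by (simp add: f_A c_def)
    finally show "(c v* A) $ i = c $ i" .
  qed
  then have "cvec c v* cmat A = cvec c"
    by (simp add: cvec_vector_matrix_mult)
  moreover have "cmat A *v v = v \<Longrightarrow> v = 0" for v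
    using no_fix unfolding is_eigenvalue_C_def by auto
  ultimately have "c = 0"
    using left_fixed_vector_eq_0 cvec_eq_0_iff by metis
  then show ?thesis
    using f_eq[of x] by (simp add: f_def)
qed

definition S_hom_matrix :: "(int \<times> (int^'n) \<Rightarrow> int \<times> (int^'m)) \<Rightarrow> int^'n^'m" where
  "S_hom_matrix h = (\<chi> i j. snd (h (0, axis j 1)) $ i)"

lemma S_hom_vec:
  assumes h: "h \<in> hom (S_grp A) (S_grp B)" and no_fix: "\<not> is_eigenvalue_C A 1"
  shows "h (0, x) = (0, S_hom_matrix h *v x)"
proof -
  note h_mult = S_hom_mult[OF h]
  have h_0: "h (0, x) = (0, snd (h (0, x)))" for x
    using S_hom_fst_vec_eq_0[OF h no_fix] by (metis prod.collapse)
  have "snd (h (0, x)) $ i = (S_hom_matrix h *v x) $ i" for i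
  proof -
    have "snd (h (0, x + y)) $ i = snd (h (0, x)) $ i + snd (h (0, y)) $ i" for x y
    proof -
      have "h (0, x + y) = h ((0, x) \<otimes>\<^bsub>S_grp A\<^esub> (0, y))"
        by (simp add: S_grp_mult)
      also have "\<dots> = h (0, x) \<otimes>\<^bsub>S_grp B\<^esub> h (0, y)"
        by (rule h_mult)
      finally show ?thesis
        by (simp add: S_grp_mult S_hom_fst_vec_eq_0[OF h no_fix])
    qed
    from additive_int_vec_eq_sum[of "\<lambda>x. snd (h (0, x)) $ i" x, OF this]
    show ?thesis
      by (simp add: S_hom_matrix_def matrix_vector_mult_def mult.commute)
  qed
  then show ?thesis
    by (subst h_0) (simp add: vec_eq_iff)
qed

lemma S_hom_intertwines:
  assumes h: "h \<in> hom (S_grp A) (S_grp B)" and no_fix: "\<not> is_eigenvalue_C A 1"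
  shows "int_matpow B (fst (h (1, 0))) ** S_hom_matrix h = S_hom_matrix h ** A"
proof (rule matrix_eq[THEN iffD2], intro allI)
  fix x
  note h_mult = S_hom_mult[OF h] and h_vec = S_hom_vec[OF h no_fix]
  have "h (1, 0) \<otimes>\<^bsub>S_grp B\<^esub> h (0, x) = h ((1, 0) \<otimes>\<^bsub>S_grp A\<^esub> (0, x))"
    by (rule h_mult[symmetric])
  also have "\<dots> = h ((0, A *v x) \<otimes>\<^bsub>S_grp A\<^esub> (1, 0))"
    by (simp add: S_grp_mult)
  also have "\<dots> = h (0, A *v x) \<otimes>\<^bsub>S_grp B\<^esub> h (1, 0)"
    by (rule h_mult)
  finally show "(int_matpow B (fst (h (1, 0))) ** S_hom_matrix h) *v x = (S_hom_matrix h ** A) *v x"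
    by (simp add: h_vec S_grp_mult matrix_vector_mul_assoc)
qed

lemma S_hom_fst:
  assumes h: "h \<in> hom (S_grp A) (S_grp B)" and no_fix: "\<not> is_eigenvalue_C A 1"
  shows "fst (h u) = fst u * fst (h (1, 0))"
proof -
  note h_mult = S_hom_mult[OF h] and h_vec = S_hom_vec[OF h no_fix]
  obtain e y where e: "h (1, 0) = (e, y)"
    by fastforce
  have h_int: "fst (h (m, 0)) = m * e" for m
  proof (induction m rule: int_induct[where k = 0])
    case base
    then show ?case
      using h_vec[of 0] by simp
  next
    case (step1 i)
    have "h (i + 1, 0) = h ((1, 0) \<otimes>\<^bsub>S_grp A\<^esub> (i, 0))"
      by (simp add: S_grp_mult add.commute)
    also have "\<dots> = h (1, 0) \<otimes>\<^bsub>S_grp B\<^esub> h (i, 0)"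
      by (rule h_mult)
    finally show ?case
      using step1 by (simp add: S_grp_mult e algebra_simps)
  next
    case (step2 i)
    have "h (i, 0) = h ((1, 0) \<otimes>\<^bsub>S_grp A\<^esub> (i - 1, 0))"
      by (simp add: S_grp_mult)
    also have "\<dots> = h (1, 0) \<otimes>\<^bsub>S_grp B\<^esub> h (i - 1, 0)"
      by (rule h_mult)
    finally show ?case
      using step2 by (simp add: S_grp_mult e algebra_simps)
  qed
  have "h u = h ((0, snd u) \<otimes>\<^bsub>S_grp A\<^esub> (fst u, 0))"
    by (simp add: S_grp_mult)
  also have "\<dots> = h (0, snd u) \<otimes>\<^bsub>S_grp B\<^esub> h (fst u, 0)"
    by (rule h_mult)
  finally show ?thesis
    by (simp add: h_vec h_int S_grp_mult e)
qed

lemma S_grp_iso_conjugate: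
  fixes A B :: "int^'n^'n"
  assumes "S_grp A \<cong> S_grp B" and no_fix_A: "\<not> is_eigenvalue_C A 1"
    and no_fix_B: "\<not> is_eigenvalue_C B 1"
  obtains P Q :: "int^'n^'n" and e :: int
  where "P ** Q = mat 1" and "e = 1 \<or> e = -1" and "int_matpow B e ** P = P ** A"
proof -
  obtain h where iso: "h \<in> iso (S_grp A) (S_grp B)"
    using assms(1) unfolding is_iso_def by blast
  define g where "g = inv_into UNIV h"
  have h: "h \<in> hom (S_grp A) (S_grp B)" and g: "g \<in> hom (S_grp B) (S_grp A)"
    using iso iso_imp_homomorphism S_iso_inv_hom unfolding g_def by blast+
  have h_g: "h (g u) = u" for u
    using iso by (simp add: iso_def bij_betw_def g_def surj_f_inv_f)
  have "(S_hom_matrix h ** S_hom_matrix g) *v x = mat 1 *v x" for x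
    using h_g[of "(0, x)"]
    by (simp add: S_hom_vec[OF g no_fix_B] S_hom_vec[OF h no_fix_A] matrix_vector_mul_assoc)
  then have "S_hom_matrix h ** S_hom_matrix g = mat 1"
    by (rule matrix_eq[THEN iffD2, rule_format])
  moreover have "fst (g (1, 0)) * fst (h (1, 0)) = 1"
    using h_g[of "(1, 0)"] S_hom_fst[OF h no_fix_A, of "g (1, 0)"] by simp
  then have "fst (h (1, 0)) = 1 \<or> fst (h (1, 0)) = -1"
    by (auto simp: zmult_eq_1_iff)
  ultimately show thesis
    using that S_hom_intertwines[OF h no_fix_A] by blast
qed

theorem corollary3p6:
  fixes A B :: "int^'n^'n"
  assumes "in_SL A" and "in_SL B"
    and "diagonal_type A" and "non_diagonal_type B"
  shows "\<not> (S_grp A \<cong> S_grp B)"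
proof
  assume "S_grp A \<cong> S_grp B"
  moreover have "\<not> is_eigenvalue_C A 1" and "\<not> is_eigenvalue_C B 1"
    using assms(3,4) by (auto simp: diagonal_type_def non_diagonal_type_def)
  ultimately obtain P Q :: "int^'n^'n" and e :: int
    where PQ: "P ** Q = mat 1" and e: "e = 1 \<or> e = -1"
      and conj: "int_matpow B e ** P = P ** A"
    by (rule S_grp_iso_conjugate)
  have "int_matpow B e = P ** A ** Q"
    by (metis PQ conj matrix_mul_assoc matrix_mul_rid)
  moreover have "cmat P ** cmat Q = mat 1"
    using PQ by (simp add: cmat_mat flip: cmat_mult)
  ultimately have "diagonalizable_mat (cmat (int_matpow B e))"
    using diagonalizable_similar[of "cmat A" "cmat P" "cmat Q"] assms(3)
    by (simp add: cmat_mult diagonal_type_def diagonalizable_C_iff_diagonalizable_cmat)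
  then have "diagonalizable_mat (cmat B)"
    using assms(2) e by (simp add: in_SL_def diagonalizable_cmat_of_int_matpow_unit)
  then show False
    using assms(4) by (simp add: non_diagonal_type_def diagonalizable_C_iff_diagonalizable_cmat)
qed

end
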